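(* In the algorithm CertifiedCurveTracking (described in the context), the updated point $\hat x=(X(h),\hat x_n+h)$, formed after the inner step-size loop exits, is a $\tau$-approximate solution to $\hat C$.
   Context: Setting: $C=\{c_1,\dots,c_{n-1}\}\subset\mathbb{Q}[X_1,\dots,X_n]$ defines a regular real curve (Jacobian of full rank at every point, no self-intersections). For a value or interval $a$, $C_a$ is the square system $(c_i(X_1,\dots,X_{n-1},a))_i$; $x_{-n}=(x_1,\dots,x_{n-1})$; $B=[-1,1]^{n-1}$. KrawczykTest$(F,y,s,A,\rho)$ returns True iff $\|-\frac1sAF(y)+(I-A\square JF(y+sB))B\|<\rho$, computed in interval arithmetic (with $\square$ an interval extension and $\|\cdot\|$ the maximal magnitude/induced $\infty$-norm over intervals), evaluated simultaneously over interval slice values and interval points when these are intervals. A point $x\in\mathbb{R}^n$ is a $\tau$-approximate solution to a curve $\hat C$ if there exist an invertible matrix $A$ and $r>0$ such that $-A\hat C_{x_n}(x_{-n})+(I-A\,J\hat C_{x_n}(x_{-n}+rB))rB\subset r\tau B$. In CertifiedCurveTracking (inputs: curve $C$, point, $r>0$, $h>0$, compact $D$, $\rho\in(0,\frac12]$, $\tau\in(\frac12,1)$), at each step one obtains a transformed curve $\hat C(X)=U^*C(VX)$ (from an SVD of the Jacobian), a point $\hat x$, radius $r$ and matrix $A$ from a refinement procedure; a predictor $X(\eta)$ ($\eta\ge0$, user-chosen, continuous, $X(0)=\hat x_{-n}$) is extended by $\hat X(\eta)=\hat x_{-n}$ for $\eta<0$, $\hat X(\eta)=X(\eta)$ for $\eta\ge0$;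 the step size $h$ is halved (and the predictor recomputed) until KrawczykTest$(\hat C_{\hat x_n+[-r\rho,h]},\hat X([-r\rho,h]),r,A,\tau)$ returns True; then one sets $\hat x=(X(h),\hat x_n+h)$. *)

theory Defs
  imports "HOL-Analysis.Analysis"
begin

text \<open>Coordinates: a point of R^n is a pair (x_{-n}, x_n) with x_{-n} :: real^'n
  (so CARD('n) = n-1) and x_n :: real.  A curve is given by the map
  C :: real^'n => real => real^'n, (x_{-n}, a) |-> C_a(x_{-n}), together with its
  partial Jacobian J w.r.t. the first n-1 variables.\<close>

definition unitbox :: "(real^'n) set" where
  "unitbox = {v. \<forall>i. \<bar>v $ i\<bar> \<le> 1}"

definition interval_mag :: "real^'n \<Rightarrow> real^'n \<Rightarrow> real" where
  "interval_mag lo hi = max (infnorm lo) (infnorm hi)"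

text \<open>KrawczykTest(C_as, Y, s, A, rho) returns True: an interval evaluation (any
  evaluation satisfying the inclusion property of interval arithmetic) of
  -1/s A C(y) + (I - A JC(y + sB)) B, with slice value ranging independently over
  the interval as, point over the box Y, Jacobian enclosed in an interval matrix
  [Jlo,Jhi], yields an interval vector [lo,hi] of magnitude < rho.\<close>
definition KrawczykTest ::
  "(real^'n \<Rightarrow> real \<Rightarrow> real^'n) \<Rightarrow> (real^'n \<Rightarrow> real \<Rightarrow> real^'n^'n) \<Rightarrow>
   real set \<Rightarrow> (real^'n) set \<Rightarrow> real \<Rightarrow> real^'n^'n \<Rightarrow> real \<Rightarrow> bool" where
  "KrawczykTest C J as Y s A \<rho> \<longleftrightarrow>
    (\<exists>Jlo Jhi lo hi.
       (\<forall>a\<in>as. \<forall>y\<in>Y. \<forall>b\<in>unitbox. J (y + s *\<^sub>R b) a \<in> cbox Jlo Jhi) \<and>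
       (\<forall>a\<in>as. \<forall>y\<in>Y. \<forall>M\<in>cbox Jlo Jhi. \<forall>b\<in>unitbox.
          - (1 / s) *\<^sub>R (A *v C y a) + (mat 1 - A ** M) *v b \<in> cbox lo hi) \<and>
       interval_mag lo hi < \<rho>)"

definition tau_approx_solution ::
  "(real^'n \<Rightarrow> real \<Rightarrow> real^'n) \<Rightarrow> (real^'n \<Rightarrow> real \<Rightarrow> real^'n^'n) \<Rightarrow>
   real^'n \<Rightarrow> real \<Rightarrow> real \<Rightarrow> bool" where
  "tau_approx_solution C J x' xn \<tau> \<longleftrightarrow>
    (\<exists>A r. invertible A \<and> r > 0 \<and>
       (\<forall>z\<in>{x' + r *\<^sub>R b | b. b \<in> unitbox}. \<forall>b\<in>unitbox.
          - (A *v C x' xn) + (mat 1 - A ** J z xn) *v (r *\<^sub>R b)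
            \<in> {(r * \<tau>) *\<^sub>R c | c. c \<in> unitbox}))"

end

theory Submission
  imports Defs
begin

text \<open>For every tested slice value \<open>a\<close> and point \<open>y\<close>, the test gives
  \<open>\<parallel>-(1/r) A C\<^sub>a(y) + (I - A J\<^sub>a(z)) b\<parallel>\<^sub>\<infinity> < \<tau>\<close> for all \<open>z \<in> y + rB\<close> and \<open>b \<in> B\<close>;
  multiplied by \<open>r\<close> this is the defining inclusion of a \<open>\<tau>\<close>-approximate solution at \<open>(y, a)\<close>,
  and the new point \<open>(X h, x\<^sub>n + h)\<close> is among the tested ones. Invertibility of \<open>A\<close> is
  forced by \<open>\<tau> \<le> 1\<close>: a kernel vector \<open>v\<close> of \<open>A J\<^sub>a(y)\<close> with \<open>\<parallel>v\<parallel>\<^sub>\<infinity> = 1\<close> is fixed by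
  \<open>I - A J\<^sub>a(y)\<close>, so \<open>w + v\<close> and \<open>w - v\<close> both have norm below 1, yet their difference
  \<open>2v\<close> has norm 2.\<close>

lemma infnorm_le_iff_components:
  fixes x :: "real^'n"
  shows "infnorm x \<le> c \<longleftrightarrow> (\<forall>i. \<bar>x $ i\<bar> \<le> c)"
proof
  assume "infnorm x \<le> c"
  then show "\<forall>i. \<bar>x $ i\<bar> \<le> c"
    using component_le_infnorm_cart order_trans by blast
next
  assume "\<forall>i. \<bar>x $ i\<bar> \<le> c"
  then show "infnorm x \<le> c"
    unfolding infnorm_cart by (intro cSup_least) auto
qed

lemma unitbox_iff_infnorm: "b \<in> unitbox \<longleftrightarrow> infnorm b \<le> 1"
  by (simp add: unitbox_def infnorm_le_iff_components)

lemma infnorm_le_interval_mag: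
  fixes x :: "real^'n"
  assumes "x \<in> cbox lo hi"
  shows "infnorm x \<le> interval_mag lo hi"
  unfolding infnorm_le_iff_components
proof
  fix i
  have "lo $ i \<le> x $ i" "x $ i \<le> hi $ i"
    using assms by (auto simp: mem_box_cart)
  moreover have "\<bar>lo $ i\<bar> \<le> interval_mag lo hi" "\<bar>hi $ i\<bar> \<le> interval_mag lo hi"
    unfolding interval_mag_def
    using component_le_infnorm_cart[of lo i] component_le_infnorm_cart[of hi i] by auto
  ultimately show "\<bar>x $ i\<bar> \<le> interval_mag lo hi"
    by linarith
qed

lemma KrawczykTest_infnorm_bound:
  assumes "KrawczykTest C J as Y s A \<rho>"
    and "a \<in> as" "y \<in> Y" "b' \<in> unitbox" "b \<in> unitbox"
  shows "infnorm (- (1 / s) *\<^sub>R (A *v C y a) + (mat 1 - A ** J (y + s *\<^sub>R b') a) *v b) < \<rho>"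
proof -
  obtain Jlo Jhi lo hi where
    J_encl: "\<forall>a\<in>as. \<forall>y\<in>Y. \<forall>b\<in>unitbox. J (y + s *\<^sub>R b) a \<in> cbox Jlo Jhi" and
    K_encl: "\<forall>a\<in>as. \<forall>y\<in>Y. \<forall>M\<in>cbox Jlo Jhi. \<forall>b\<in>unitbox.
      - (1 / s) *\<^sub>R (A *v C y a) + (mat 1 - A ** M) *v b \<in> cbox lo hi" and
    mag: "interval_mag lo hi < \<rho>"
    using assms(1) unfolding KrawczykTest_def by blast
  have "J (y + s *\<^sub>R b') a \<in> cbox Jlo Jhi"
    using J_encl assms(2-4) by blast
  then have "- (1 / s) *\<^sub>R (A *v C y a) + (mat 1 - A ** J (y + s *\<^sub>R b') a) *v b \<in> cbox lo hi"
    using K_encl assms(2,3,5) by blast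
  then show ?thesis
    using infnorm_le_interval_mag mag by fastforce
qed

lemma invertible_if_Krawczyk_image_bounded:
  fixes P :: "real^'n^'n"
  assumes bound: "\<And>b. b \<in> unitbox \<Longrightarrow> infnorm (w + (mat 1 - P) *v b) < 1"
  shows "invertible P"
proof -
  have "v = 0" if "P *v v = 0" for v
  proof (rule ccontr)
    assume "v \<noteq> 0"
    define b where "b = (1 / infnorm v) *\<^sub>R v"
    have norm_b: "infnorm b = 1"
      using \<open>v \<noteq> 0\<close> infnorm_pos_lt[of v] by (simp add: b_def infnorm_mul)
    have fixed: "(mat 1 - P) *v b = b"
      using that by (simp add: b_def matrix_vector_mult_diff_rdistrib matrix_vector_mult_scaleR)
    then have fixed_neg: "(mat 1 - P) *v (- b) = - b"
      by (metis matrix_vector_mult_scaleR scaleR_minus1_left)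
    have "b \<in> unitbox" "- b \<in> unitbox"
      using norm_b by (simp_all add: unitbox_iff_infnorm infnorm_neg)
    then have "infnorm (w + b) < 1" "infnorm (w - b) < 1"
      using bound fixed fixed_neg by fastforce+
    moreover have "2 *\<^sub>R b = (w + b) + - (w - b)"
      by (simp add: scaleR_2)
    then have "infnorm (2 *\<^sub>R b) \<le> infnorm (w + b) + infnorm (w - b)"
      by (metis infnorm_triangle infnorm_neg)
    moreover have "infnorm (2 *\<^sub>R b) = 2"
      using norm_b by (simp only: infnorm_mul)
    ultimately show False
      by linarith
  qed
  then have "\<exists>Q. Q ** P = mat 1"
    using matrix_left_invertible_ker by blast
  then show ?thesis
    using invertible_left_inverse by blast
qed

lemma invertible_left_factor:
  fixes A B :: "real^'n^'n"
  assumes "invertible (A ** B)"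
  shows "invertible A"
proof -
  obtain Q where "A ** B ** Q = mat 1"
    using assms invertible_right_inverse by blast
  then have "A ** (B ** Q) = mat 1"
    by (simp add: matrix_mul_assoc)
  then show ?thesis
    using invertible_right_inverse by blast
qed

lemma tau_approx_solutionI:
  fixes C :: "real^'n \<Rightarrow> real \<Rightarrow> real^'n" and J :: "real^'n \<Rightarrow> real \<Rightarrow> real^'n^'n"
  assumes "invertible A" "r > 0" "\<tau> > 0"
    and bound: "\<And>b' b. b' \<in> unitbox \<Longrightarrow> b \<in> unitbox \<Longrightarrow>
      infnorm (- (1 / r) *\<^sub>R (A *v C x' xn) + (mat 1 - A ** J (x' + r *\<^sub>R b') xn) *v b) \<le> \<tau>"
  shows "tau_approx_solution C J x' xn \<tau>"
  unfolding tau_approx_solution_def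
proof (intro exI conjI ballI)
  fix z b :: "real^'n"
  assume "z \<in> {x' + r *\<^sub>R b | b. b \<in> unitbox}" and b: "b \<in> unitbox"
  then obtain b' where b': "b' \<in> unitbox" and z: "z = x' + r *\<^sub>R b'"
    by blast
  define u where "u = - (1 / r) *\<^sub>R (A *v C x' xn) + (mat 1 - A ** J z xn) *v b"
  have "- (A *v C x' xn) + (mat 1 - A ** J z xn) *v (r *\<^sub>R b) = (r * \<tau>) *\<^sub>R ((1 / \<tau>) *\<^sub>R u)"
    using assms(2,3) by (simp add: u_def matrix_vector_mult_scaleR scaleR_add_right scaleR_diff_right)
  moreover have "(1 / \<tau>) *\<^sub>R u \<in> unitbox"
    using bound[OF b' b] assms(3) by (simp add: u_def z unitbox_iff_infnorm infnorm_mul)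
  ultimately show "- (A *v C x' xn) + (mat 1 - A ** J z xn) *v (r *\<^sub>R b)
      \<in> {(r * \<tau>) *\<^sub>R c | c. c \<in> unitbox}"
    by blast
qed (use assms in auto)

lemma KrawczykTest_imp_tau_approx_solution:
  assumes test: "KrawczykTest C J as Y r A \<tau>"
    and "r > 0" "\<tau> \<le> 1" "a \<in> as" "y \<in> Y"
  shows "tau_approx_solution C J y a \<tau>"
proof -
  note bound = KrawczykTest_infnorm_bound[OF test \<open>a \<in> as\<close> \<open>y \<in> Y\<close>]
  have "0 \<in> unitbox"
    by (simp add: unitbox_def)
  then have "invertible (A ** J y a)"
    using bound[of 0] \<open>\<tau> \<le> 1\<close>
    by (intro invertible_if_Krawczyk_image_bounded[where w = "- (1 / r) *\<^sub>R (A *v C y a)"])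
      fastforce
  then have "invertible A"
    by (rule invertible_left_factor)
  moreover have "\<tau> > 0"
    using bound[OF \<open>0 \<in> unitbox\<close> \<open>0 \<in> unitbox\<close>] infnorm_pos_le by (meson le_less_trans)
  ultimately show ?thesis
    using bound by (intro tau_approx_solutionI[OF _ \<open>r > 0\<close>]) (auto intro: less_imp_le)
qed

theorem mainTheorem3:
  fixes C :: "real^'n \<Rightarrow> real \<Rightarrow> real^'n"
    and J :: "real^'n \<Rightarrow> real \<Rightarrow> real^'n^'n"
    and x' :: "real^'n" and xn r h \<rho> \<tau> :: real
    and A :: "real^'n^'n"
    and X Xhat :: "real \<Rightarrow> real^'n"
    and Y :: "(real^'n) set"
  assumes jac: "\<And>a y. ((\<lambda>z. C z a) has_derivative (\<lambda>v. J y a *v v)) (at y)"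
    and r: "r > 0" and h: "h > 0"
    and rho: "0 < \<rho>" "\<rho> \<le> 1/2"
    and tau: "1/2 < \<tau>" "\<tau> < 1"
    and Xcont: "continuous_on {0..} X" and X0: "X 0 = x'"
    and Xhat: "\<And>\<eta>. Xhat \<eta> = (if \<eta> < 0 then x' else X \<eta>)"
    and Ybox: "\<exists>ylo yhi. Y = cbox ylo yhi"
    and Yencl: "\<forall>\<eta>\<in>{- r * \<rho> .. h}. Xhat \<eta> \<in> Y"
    and test: "KrawczykTest C J {xn - r * \<rho> .. xn + h} Y r A \<tau>"
  shows "tau_approx_solution C J (X h) (xn + h) \<tau>"
proof -
  have "0 < r * \<rho>"
    using r rho by simp
  then have "xn + h \<in> {xn - r * \<rho> .. xn + h}" "h \<in> {- r * \<rho> .. h}"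
    using h by auto
  moreover have "X h \<in> Y"
    using Yencl \<open>h \<in> {- r * \<rho> .. h}\<close> Xhat[of h] h by fastforce
  ultimately show ?thesis
    using KrawczykTest_imp_tau_approx_solution[OF test r] tau by auto
qed

end
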